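(* Let $m,n\ge 6$ be integers. Then $$\max\{\gamma_2^d(C_{m-1}\Box C_n),\ \gamma_2^d(C_m\Box C_{n-1})\}\le \gamma_2^d(C_m\Box C_n).$$
   Context: $C_k$ denotes the cycle on $k$ vertices, and $G\Box H$ is the Cartesian product: vertex set $V(G)\times V(H)$, with $(g,h)\sim(g',h')$ iff either $g=g'$ and $hh'\in E(H)$, or $h=h'$ and $gg'\in E(G)$. For a simple graph $\Gamma$ and a vertex $v$, let $\Gamma(v)$ be the set of vertices at distance $1$ from $v$ and $\Gamma_2(v)$ the set of vertices at distance exactly $2$ from $v$. A set $S\subseteq V(\Gamma)$ is a disjunctive dominating set if every vertex $v\notin S$ satisfies $|\Gamma(v)\cap S|\ge 1$ or $|\Gamma_2(v)\cap S|\ge 2$. The disjunctive domination number $\gamma_2^d(\Gamma)$ is the minimum cardinality of a disjunctive dominating set of $\Gamma$. *)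

theory Defs
  imports Main
begin

text \<open>A finite simple graph is given by a vertex set V and a symmetric irreflexive
adjacency relation E (only its restriction to V matters).\<close>

definition walk :: "'a set \<Rightarrow> ('a \<Rightarrow> 'a \<Rightarrow> bool) \<Rightarrow> nat \<Rightarrow> 'a \<Rightarrow> 'a \<Rightarrow> bool" where
  "walk V E k v w \<longleftrightarrow> (\<exists>p::nat \<Rightarrow> 'a. p 0 = v \<and> p k = w \<and> (\<forall>i\<le>k. p i \<in> V)
      \<and> (\<forall>i<k. E (p i) (p (Suc i))))"

definition at_dist :: "'a set \<Rightarrow> ('a \<Rightarrow> 'a \<Rightarrow> bool) \<Rightarrow> nat \<Rightarrow> 'a \<Rightarrow> 'a set" where
  "at_dist V E k v = {w \<in> V. walk V E k v w \<and> (\<forall>j<k. \<not> walk V E j v w)}"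

definition disj_dom_set :: "'a set \<Rightarrow> ('a \<Rightarrow> 'a \<Rightarrow> bool) \<Rightarrow> 'a set \<Rightarrow> bool" where
  "disj_dom_set V E S \<longleftrightarrow> S \<subseteq> V \<and>
     (\<forall>v \<in> V - S. card (at_dist V E 1 v \<inter> S) \<ge> 1 \<or> card (at_dist V E 2 v \<inter> S) \<ge> 2)"

definition disj_dom_num :: "'a set \<Rightarrow> ('a \<Rightarrow> 'a \<Rightarrow> bool) \<Rightarrow> nat" where
  "disj_dom_num V E = Min (card ` {S. disj_dom_set V E S})"

definition cycle_V :: "nat \<Rightarrow> nat set" where
  "cycle_V k = {0..<k}"

definition cycle_E :: "nat \<Rightarrow> nat \<Rightarrow> nat \<Rightarrow> bool" where
  "cycle_E k i j \<longleftrightarrow> i \<noteq> j \<and> (j = (i + 1) mod k \<or> i = (j + 1) mod k)"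

definition cprod_V :: "'a set \<Rightarrow> 'b set \<Rightarrow> ('a \<times> 'b) set" where
  "cprod_V V1 V2 = V1 \<times> V2"

definition cprod_E :: "('a \<Rightarrow> 'a \<Rightarrow> bool) \<Rightarrow> ('b \<Rightarrow> 'b \<Rightarrow> bool) \<Rightarrow> 'a \<times> 'b \<Rightarrow> 'a \<times> 'b \<Rightarrow> bool" where
  "cprod_E E1 E2 x y \<longleftrightarrow> (fst x = fst y \<and> E2 (snd x) (snd y)) \<or> (snd x = snd y \<and> E1 (fst x) (fst y))"

definition torus_ddn :: "nat \<Rightarrow> nat \<Rightarrow> nat" where
  "torus_ddn m n = disj_dom_num (cprod_V (cycle_V m) (cycle_V n)) (cprod_E (cycle_E m) (cycle_E n))"

end

theory Submission
  imports Defs "HOL-Number_Theory.Cong"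
begin

text \<open>Merging the adjacent columns m-2 and m-1 of C_m \<box> C_n is a map onto C_(m-1) \<box> C_n
  that sends every edge to an edge or a vertex. It maps a disjunctive dominating set onto one
  of no larger size, provided it never identifies two vertices s, t at distance 2 from a common
  vertex v. Identified vertices are adjacent, so s, t would close a walk of length 5 through v;
  but since every step changes one coordinate by \<plusminus>1, a closed walk in C_m \<box> C_n shorter
  than m and n has zero net displacement in both coordinates and hence even length.
  The other inequality follows by symmetry of the product.\<close>

lemma walk_0: "walk V E 0 v w \<longleftrightarrow> v \<in> V \<and> w = v"
  unfolding walk_def by (auto intro!: exI[of _ "\<lambda>_. v"])

lemma walk_Suc:
  "walk V E (Suc k) v w \<longleftrightarrow> (\<exists>u. walk V E k v u \<and> w \<in> V \<and> E u w)"
proof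
  assume "walk V E (Suc k) v w"
  then obtain p where p: "p 0 = v" "p (Suc k) = w" "\<forall>i\<le>Suc k. p i \<in> V"
    "\<forall>i<Suc k. E (p i) (p (Suc i))"
    unfolding walk_def by blast
  then have "walk V E k v (p k)" unfolding walk_def by (intro exI[of _ p]) auto
  with p show "\<exists>u. walk V E k v u \<and> w \<in> V \<and> E u w" by auto
next
  assume "\<exists>u. walk V E k v u \<and> w \<in> V \<and> E u w"
  then obtain u p where p: "p 0 = v" "p k = u" "\<forall>i\<le>k. p i \<in> V" "\<forall>i<k. E (p i) (p (Suc i))"
    and "w \<in> V" "E u w"
    unfolding walk_def by blast
  then show "walk V E (Suc k) v w" unfolding walk_def
    by (intro exI[of _ "p(Suc k := w)"]) (auto simp: le_Suc_eq less_Suc_eq)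
qed

lemma at_dist_1: "w \<in> at_dist V E 1 v \<longleftrightarrow> v \<in> V \<and> w \<in> V \<and> E v w \<and> w \<noteq> v"
  by (auto simp: at_dist_def walk_0 walk_Suc)

lemma at_dist_2:
  "w \<in> at_dist V E 2 v \<longleftrightarrow>
     v \<in> V \<and> w \<in> V \<and> (\<exists>u\<in>V. E v u \<and> E u w) \<and> w \<noteq> v \<and> \<not> E v w"
  by (auto simp: at_dist_def walk_0 walk_Suc numeral_2_eq_2 less_Suc_eq)

lemma at_dist_2_adjacent_imp_closed_walk:
  assumes sym: "\<And>x y. E x y \<Longrightarrow> E y x"
    and "s \<in> at_dist V E 2 v" "t \<in> at_dist V E 2 v" "E s t"
  shows "walk V E 5 v v"
proof -
  obtain u where "E v u" "E u t" "u \<in> V"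
    using assms(3) by (auto simp: at_dist_2)
  moreover obtain w where "E v w" "E w s" "w \<in> V" "v \<in> V" "s \<in> V" "t \<in> V"
    using assms(2,3) by (auto simp: at_dist_2)
  ultimately show ?thesis
    using sym \<open>E s t\<close> by (simp add: eval_nat_numeral walk_Suc walk_0) meson
qed

lemma finite_at_dist: "finite V \<Longrightarrow> finite (at_dist V E k v)"
  by (simp add: at_dist_def)

lemma one_le_card_iff: "finite A \<Longrightarrow> 1 \<le> card A \<longleftrightarrow> A \<noteq> {}"
  by (simp add: Suc_le_eq card_gt_0_iff)

lemma two_le_card_iff: "finite A \<Longrightarrow> 2 \<le> card A \<longleftrightarrow> (\<exists>x\<in>A. \<exists>y\<in>A. x \<noteq> y)"
proof -
  have "2 \<le> card A \<longleftrightarrow> \<not> card A \<le> Suc 0" by arith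
  also assume "finite A"
  then have "\<not> card A \<le> Suc 0 \<longleftrightarrow> (\<exists>x\<in>A. \<exists>y\<in>A. x \<noteq> y)"
    by (auto simp: card_le_Suc0_iff_eq)
  finally show ?thesis .
qed

lemma at_dist_1_image:
  assumes hV: "h ` V \<subseteq> V'"
    and hE: "\<And>x y. x \<in> V \<Longrightarrow> y \<in> V \<Longrightarrow> E x y \<Longrightarrow> h x = h y \<or> E' (h x) (h y)"
    and "s \<in> at_dist V E 1 v"
  shows "h s = h v \<or> h s \<in> at_dist V' E' 1 (h v)"
proof -
  have "v \<in> V" "s \<in> V" "E v s" using assms(3) unfolding at_dist_1 by auto
  then show ?thesis using hE[of v s] hV unfolding at_dist_1 by auto
qed

lemma at_dist_2_image:
  assumes hV: "h ` V \<subseteq> V'"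
    and hE: "\<And>x y. x \<in> V \<Longrightarrow> y \<in> V \<Longrightarrow> E x y \<Longrightarrow> h x = h y \<or> E' (h x) (h y)"
    and "s \<in> at_dist V E 2 v"
  shows "h s = h v \<or> h s \<in> at_dist V' E' 1 (h v) \<or> h s \<in> at_dist V' E' 2 (h v)"
proof -
  obtain u where "u \<in> V" "E v u" "E u s" "v \<in> V" "s \<in> V"
    using assms(3) by (auto simp: at_dist_2)
  then have "h v = h u \<or> E' (h v) (h u)" "h u = h s \<or> E' (h u) (h s)"
    and "h u \<in> V'" "h v \<in> V'" "h s \<in> V'"
    using hE[of v u] hE[of u s] hV by auto
  then show ?thesis unfolding at_dist_1 at_dist_2 by metis
qed

lemma disj_dom_set_image:
  assumes "finite V" and hV: "h ` V = V'"
    and hE: "\<And>x y. x \<in> V \<Longrightarrow> y \<in> V \<Longrightarrow> E x y \<Longrightarrow> h x = h y \<or> E' (h x) (h y)"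
    and h_inj: "\<And>v s t. s \<in> at_dist V E 2 v \<Longrightarrow> t \<in> at_dist V E 2 v \<Longrightarrow> h s = h t \<Longrightarrow> s = t"
    and S: "disj_dom_set V E S"
  shows "disj_dom_set V' E' (h ` S)"
  unfolding disj_dom_set_def
proof (intro conjI ballI)
  show "h ` S \<subseteq> V'" using S hV by (auto simp: disj_dom_set_def)
  have "finite V'" using \<open>finite V\<close> hV by (metis finite_imageI)
  then have fin': "finite (at_dist V' E' k v' \<inter> h ` S)" for k v'
    by (simp add: finite_at_dist)
  fix v' assume v': "v' \<in> V' - h ` S"
  then obtain v where v: "v \<in> V" "h v = v'" using hV by blast
  have hS: "h s \<noteq> h v" if "s \<in> S" for s using that v v' by (metis Diff_iff image_eqI)
  then have "v \<notin> S" by blast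
  have hV': "h ` V \<subseteq> V'" using hV by simp
  have fin: "finite (at_dist V E k v \<inter> S)" for k
    using \<open>finite V\<close> by (simp add: finite_at_dist)
  have "card (at_dist V E 1 v \<inter> S) \<ge> 1 \<or> card (at_dist V E 2 v \<inter> S) \<ge> 2"
    using S v \<open>v \<notin> S\<close> unfolding disj_dom_set_def by blast
  then consider s where "s \<in> at_dist V E 1 v \<inter> S"
    | s t where "s \<in> at_dist V E 2 v \<inter> S" "t \<in> at_dist V E 2 v \<inter> S" "s \<noteq> t"
    using one_le_card_iff[OF fin] two_le_card_iff[OF fin] by blast
  then show "card (at_dist V' E' 1 v' \<inter> h ` S) \<ge> 1 \<or> card (at_dist V' E' 2 v' \<inter> h ` S) \<ge> 2"
  proof cases
    case 1
    then have "h s \<in> at_dist V' E' 1 v' \<inter> h ` S"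
      using at_dist_1_image[OF hV' hE] hS v(2) by blast
    then show ?thesis using one_le_card_iff[OF fin'] by blast
  next
    case 2
    then have "h s \<in> (at_dist V' E' 1 v' \<union> at_dist V' E' 2 v') \<inter> h ` S"
      "h t \<in> (at_dist V' E' 1 v' \<union> at_dist V' E' 2 v') \<inter> h ` S"
      using at_dist_2_image[OF hV' hE] hS v(2) by blast+
    moreover have "h s \<noteq> h t" using h_inj 2 by blast
    ultimately show ?thesis
      using one_le_card_iff[OF fin'] two_le_card_iff[OF fin'] by blast
  qed
qed

lemma finite_disj_dom_set_cards:
  assumes "finite V"
  shows "finite (card ` {S. disj_dom_set V E S})"
proof -
  have "{S. disj_dom_set V E S} \<subseteq> Pow V" by (auto simp: disj_dom_set_def)
  then show ?thesis using assms finite_subset by blast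
qed

lemma disj_dom_num_le: "finite V \<Longrightarrow> disj_dom_set V E S \<Longrightarrow> disj_dom_num V E \<le> card S"
  unfolding disj_dom_num_def by (intro Min_le finite_disj_dom_set_cards) auto

lemma disj_dom_num_attained:
  assumes "finite V"
  obtains S where "disj_dom_set V E S" "card S = disj_dom_num V E"
proof -
  have "disj_dom_set V E V" by (simp add: disj_dom_set_def)
  then have "disj_dom_num V E \<in> card ` {S. disj_dom_set V E S}"
    unfolding disj_dom_num_def using finite_disj_dom_set_cards[OF assms] by (intro Min_in) auto
  then show ?thesis using that by auto
qed

lemma disj_dom_num_image_le:
  assumes "finite V" and hV: "h ` V = V'"
    and "\<And>x y. x \<in> V \<Longrightarrow> y \<in> V \<Longrightarrow> E x y \<Longrightarrow> h x = h y \<or> E' (h x) (h y)"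
    and "\<And>v s t. s \<in> at_dist V E 2 v \<Longrightarrow> t \<in> at_dist V E 2 v \<Longrightarrow> h s = h t \<Longrightarrow> s = t"
  shows "disj_dom_num V' E' \<le> disj_dom_num V E"
proof -
  obtain S where S: "disj_dom_set V E S" "card S = disj_dom_num V E"
    using disj_dom_num_attained[OF \<open>finite V\<close>] .
  have "finite V'" using \<open>finite V\<close> hV by (metis finite_imageI)
  then have "disj_dom_num V' E' \<le> card (h ` S)"
    using disj_dom_set_image[OF assms S(1)] by (rule disj_dom_num_le)
  also have "\<dots> \<le> card S"
    using S(1) \<open>finite V\<close> by (intro card_image_le) (auto simp: disj_dom_set_def finite_subset)
  finally show ?thesis using S(2) by simp
qed

lemma cycle_E_sym: "cycle_E k i j \<Longrightarrow> cycle_E k j i"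
  by (auto simp: cycle_E_def)

lemma cycle_E_iff:
  assumes "i < k" "j < k"
  shows "cycle_E k i j \<longleftrightarrow>
    i \<noteq> j \<and> (j = i + 1 \<or> i = j + 1 \<or> (i = 0 \<and> j = k - 1) \<or> (j = 0 \<and> i = k - 1))"
proof -
  have "(x + 1) mod k = (if x + 1 = k then 0 else x + 1)" if "x < k" for x
    using that by auto
  with assms show ?thesis unfolding cycle_E_def by auto
qed

lemma cycle_E_displacement:
  assumes "cycle_E k i j"
  obtains d :: int where "d \<in> {1, -1}" "[int j = int i + d] (mod int k)"
proof -
  have "[int j = int i + 1] (mod int k) \<or> [int j = int i - 1] (mod int k)"
    using assms unfolding cycle_E_def cong_def by (auto simp: of_nat_mod mod_diff_left_eq add.commute)
  then show ?thesis using that[of 1] that[of "-1"] by auto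
qed

definition cycle_contract :: "nat \<Rightarrow> nat \<Rightarrow> nat" where
  "cycle_contract k i = (if i = k - 1 then k - 2 else i)"

lemma cycle_contract_image: "2 \<le> k \<Longrightarrow> cycle_contract k ` cycle_V k = cycle_V (k - 1)"
  by (force simp: cycle_contract_def cycle_V_def image_iff)

lemma cycle_contract_edge:
  assumes "4 \<le> k" "i < k" "j < k" "cycle_E k i j"
  shows "cycle_contract k i = cycle_contract k j \<or> cycle_E (k - 1) (cycle_contract k i) (cycle_contract k j)"
proof -
  have lt: "cycle_contract k x < k - 1" if "x < k" for x
    using that assms(1) by (auto simp: cycle_contract_def)
  show ?thesis
    using assms unfolding cycle_E_iff[OF assms(2,3)] cycle_E_iff[OF lt[OF assms(2)] lt[OF assms(3)]]
    by (auto simp: cycle_contract_def)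
qed

lemma cycle_contract_eq_imp_edge:
  assumes "i < k" "j < k" "i \<noteq> j" "cycle_contract k i = cycle_contract k j"
  shows "cycle_E k i j"
  using assms unfolding cycle_E_iff[OF assms(1,2)] by (auto simp: cycle_contract_def split: if_splits)

abbreviation torus_V :: "nat \<Rightarrow> nat \<Rightarrow> (nat \<times> nat) set" where
  "torus_V m n \<equiv> cprod_V (cycle_V m) (cycle_V n)"

abbreviation torus_E :: "nat \<Rightarrow> nat \<Rightarrow> nat \<times> nat \<Rightarrow> nat \<times> nat \<Rightarrow> bool" where
  "torus_E m n \<equiv> cprod_E (cycle_E m) (cycle_E n)"

lemma torus_E_sym: "torus_E m n x y \<Longrightarrow> torus_E m n y x"
  by (auto simp: cprod_E_def cycle_E_sym)

lemma torus_walk_displacement: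
  assumes "walk (torus_V m n) (torus_E m n) l v w"
  obtains a b :: int where "\<bar>a\<bar> + \<bar>b\<bar> \<le> int l" "even (a + b + int l)"
    "[int (fst w) = int (fst v) + a] (mod int m)" "[int (snd w) = int (snd v) + b] (mod int n)"
  using assms
proof (induction l arbitrary: w thesis)
  case 0
  then have "w = v" by (simp add: walk_0)
  then show ?case by (intro "0.prems"(1)[of 0 0]) simp_all
next
  case (Suc l)
  then obtain u where "walk (torus_V m n) (torus_E m n) l v u" "torus_E m n u w"
    by (auto simp: walk_Suc)
  moreover obtain a b :: int where ab: "\<bar>a\<bar> + \<bar>b\<bar> \<le> int l" "even (a + b + int l)"
    "[int (fst u) = int (fst v) + a] (mod int m)" "[int (snd u) = int (snd v) + b] (mod int n)"
    using Suc.IH calculation(1) by blast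
  ultimately consider "fst u = fst w" "cycle_E n (snd u) (snd w)" | "snd u = snd w" "cycle_E m (fst u) (fst w)"
    by (auto simp: cprod_E_def)
  then show ?case
  proof cases
    case 1
    then obtain d :: int where "d \<in> {1, -1}" "[int (snd w) = int (snd u) + d] (mod int n)"
      by (auto elim: cycle_E_displacement)
    then have "[int (snd w) = int (snd v) + (b + d)] (mod int n)"
      using cong_trans cong_add[OF ab(4) cong_refl[of d]] by (metis add.assoc)
    then show ?thesis using ab 1 \<open>d \<in> {1, -1}\<close>
      by (intro Suc.prems(1)[of a "b + d"]) auto
  next
    case 2
    then obtain d :: int where "d \<in> {1, -1}" "[int (fst w) = int (fst u) + d] (mod int m)"
      by (auto elim: cycle_E_displacement)
    then have "[int (fst w) = int (fst v) + (a + d)] (mod int m)"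
      using cong_trans cong_add[OF ab(3) cong_refl[of d]] by (metis add.assoc)
    then show ?thesis using ab 2 \<open>d \<in> {1, -1}\<close>
      by (intro Suc.prems(1)[of "a + d" b]) auto
  qed
qed

lemma torus_closed_walk_even:
  assumes "walk (torus_V m n) (torus_E m n) l v v" "l < m" "l < n"
  shows "even l"
proof -
  obtain a b :: int where ab: "\<bar>a\<bar> + \<bar>b\<bar> \<le> int l" "even (a + b + int l)"
    "[int (fst v) = int (fst v) + a] (mod int m)" "[int (snd v) = int (snd v) + b] (mod int n)"
    using torus_walk_displacement[OF assms(1)] .
  have "int m dvd a" "int n dvd b"
    using cong_add_lcancel_0[of "int (fst v)"] cong_add_lcancel_0[of "int (snd v)"] ab(3,4)
    by (metis cong_0_iff cong_sym)+
  moreover have "\<bar>a\<bar> < int m" "\<bar>b\<bar> < int n" using ab(1) assms(2,3) by linarith+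
  ultimately have "a = 0" "b = 0" by (metis dvd_imp_le_int not_less abs_of_nat)+
  then show ?thesis using ab(2) by simp
qed

lemma torus_ddn_swap_le: "torus_ddn n m \<le> torus_ddn m n"
  unfolding torus_ddn_def
proof (rule disj_dom_num_image_le[where h = prod.swap])
  show "finite (torus_V m n)" by (simp add: cprod_V_def cycle_V_def)
  show "prod.swap ` torus_V m n = torus_V n m" by (simp add: cprod_V_def product_swap)
qed (auto simp: cprod_E_def)

lemma torus_ddn_commute: "torus_ddn n m = torus_ddn m n"
  by (simp add: antisym torus_ddn_swap_le)

lemma torus_ddn_contract_le:
  assumes "6 \<le> m" "6 \<le> n"
  shows "torus_ddn (m - 1) n \<le> torus_ddn m n"
  unfolding torus_ddn_def
proof (rule disj_dom_num_image_le[where h = "map_prod (cycle_contract m) id"])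
  show "finite (torus_V m n)" by (simp add: cprod_V_def cycle_V_def)
  show "map_prod (cycle_contract m) id ` torus_V m n = torus_V (m - 1) n"
    using assms by (simp add: cprod_V_def map_prod_surj_on cycle_contract_image)
next
  fix x y assume "x \<in> torus_V m n" "y \<in> torus_V m n" "torus_E m n x y"
  then show "map_prod (cycle_contract m) id x = map_prod (cycle_contract m) id y \<or>
      torus_E (m - 1) n (map_prod (cycle_contract m) id x) (map_prod (cycle_contract m) id y)"
    using cycle_contract_edge[of m "fst x" "fst y"] assms
    by (cases x; cases y) (auto simp: cprod_E_def cprod_V_def cycle_V_def)
next
  fix v s t assume st: "s \<in> at_dist (torus_V m n) (torus_E m n) 2 v"
    "t \<in> at_dist (torus_V m n) (torus_E m n) 2 v"
    and "map_prod (cycle_contract m) id s = map_prod (cycle_contract m) id t"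
  then have "fst s < m" "fst t < m" "snd s = snd t"
    and contract_eq: "cycle_contract m (fst s) = cycle_contract m (fst t)"
    by (auto simp: at_dist_def cprod_V_def cycle_V_def map_prod_def split: prod.splits)
  show "s = t"
  proof (rule ccontr)
    assume "s \<noteq> t"
    then have "torus_E m n s t"
      using cycle_contract_eq_imp_edge[OF \<open>fst s < m\<close> \<open>fst t < m\<close> _ contract_eq] \<open>snd s = snd t\<close>
      by (auto simp: cprod_E_def prod_eq_iff)
    then have "walk (torus_V m n) (torus_E m n) 5 v v"
      using at_dist_2_adjacent_imp_closed_walk[OF torus_E_sym st] by blast
    with assms show False using torus_closed_walk_even by fastforce
  qed
qed

theorem lemma3:
  fixes m n :: nat
  assumes "m \<ge> 6" and "n \<ge> 6"
  shows "max (torus_ddn (m - 1) n) (torus_ddn m (n - 1)) \<le> torus_ddn m n"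
proof -
  have "torus_ddn m (n - 1) = torus_ddn (n - 1) m" by (rule torus_ddn_commute)
  also have "\<dots> \<le> torus_ddn n m" using torus_ddn_contract_le assms by blast
  also have "\<dots> = torus_ddn m n" by (rule torus_ddn_commute)
  finally show ?thesis using torus_ddn_contract_le[OF assms] by simp
qed

end
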